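(* Let $G$ be a graph with degree sequence $(d_1, \ldots, d_n)$, where $d_1 \geq d_2 \geq \cdots \geq d_n$. Let $\Sigma$ be a signed graph with underlying graph $G$. Then $$l(\Sigma) \leq \sum_{i=1}^{l_0(\Sigma)} \left\lfloor \frac{d_i}{2} \right\rfloor.$$
   Context: A signed graph $\Sigma = (G,\sigma)$ consists of a finite graph $G$ (loops and multiple edges allowed) and a sign function $\sigma: E(G) \to \{+1,-1\}$. A circle is a connected nonempty $2$-regular subgraph; it is positive if the product of the signs of its edges is $+1$ and negative otherwise. $\Sigma$ is balanced if all its circles are positive. The frustration index $l(\Sigma)$ is the smallest number of edges whose deletion from $\Sigma$ leaves a balanced signed graph. The frustration number $l_0(\Sigma)$ is the smallest number of vertices whose deletion (together with all incident edges) from $\Sigma$ leaves a balanced signed graph. *)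

theory Defs
  imports Main
begin

text \<open>A signed graph is given by a finite vertex set V, a finite edge set E,
an endpoint map ends (each edge has one endpoint (loop) or two endpoints;
multiple edges are allowed since edges are abstract) and a sign map into {1,-1}.\<close>

definition signed_graph :: "'v set \<Rightarrow> 'e set \<Rightarrow> ('e \<Rightarrow> 'v set) \<Rightarrow> ('e \<Rightarrow> int) \<Rightarrow> bool" where
  "signed_graph V E ends \<sigma> \<longleftrightarrow> finite V \<and> finite E \<and>
     (\<forall>e\<in>E. ends e \<subseteq> V \<and> card (ends e) \<in> {1,2} \<and> \<sigma> e \<in> {1,-1})"

definition deg_in :: "'e set \<Rightarrow> ('e \<Rightarrow> 'v set) \<Rightarrow> 'v \<Rightarrow> nat" where
  "deg_in C ends v = card {e\<in>C. v \<in> ends e \<and> card (ends e) = 2} + 2 * card {e\<in>C. ends e = {v}}"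

definition is_circle :: "('e \<Rightarrow> 'v set) \<Rightarrow> 'e set \<Rightarrow> bool" where
  "is_circle ends C \<longleftrightarrow> C \<noteq> {} \<and> finite C \<and>
     (\<forall>v\<in>\<Union>(ends ` C). deg_in C ends v = 2) \<and>
     (\<forall>u\<in>\<Union>(ends ` C). \<forall>v\<in>\<Union>(ends ` C). (\<lambda>x y. \<exists>e\<in>C. ends e = {x,y})\<^sup>*\<^sup>* u v)"

definition balanced :: "('e \<Rightarrow> 'v set) \<Rightarrow> ('e \<Rightarrow> int) \<Rightarrow> 'e set \<Rightarrow> bool" where
  "balanced ends \<sigma> F \<longleftrightarrow> (\<forall>C. C \<subseteq> F \<and> is_circle ends C \<longrightarrow> (\<Prod>e\<in>C. \<sigma> e) = 1)"

definition frustration_index :: "'e set \<Rightarrow> ('e \<Rightarrow> 'v set) \<Rightarrow> ('e \<Rightarrow> int) \<Rightarrow> nat" where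
  "frustration_index E ends \<sigma> = Min {card F | F. F \<subseteq> E \<and> balanced ends \<sigma> (E - F)}"

text \<open>Deleting a vertex set X removes all edges incident to X.\<close>
definition frustration_number :: "'v set \<Rightarrow> 'e set \<Rightarrow> ('e \<Rightarrow> 'v set) \<Rightarrow> ('e \<Rightarrow> int) \<Rightarrow> nat" where
  "frustration_number V E ends \<sigma> =
     Min {card X | X. X \<subseteq> V \<and> balanced ends \<sigma> {e\<in>E. ends e \<inter> X = {}}}"

end

theory Submission
  imports Defs "HOL-Library.Transitive_Closure_Table"
begin

(* By Harary's theorem, a signed graph is balanced iff some switching function
   \<tau> : V \<rightarrow> {1, -1} makes every edge consistent: \<sigma>(uv) = \<tau>(u)\<tau>(v) on links, and loops positive.
   Take a minimum vertex set X whose deletion balances the graph, and a switching function of the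
   remainder. Among all switching functions that agree with it off X, pick one with the fewest
   inconsistent edges; deleting these edges leaves a balanced graph, and each of them meets X.
   Switching a single x \<in> X toggles the consistency of exactly the links at x, so by minimality at
   most half of them are inconsistent; loops count twice in the degree, so at most
   \<lfloor>d(x)/2\<rfloor> inconsistent edges meet x. Summing over X and comparing with the
   |X| = l\<^sub>0 largest degrees gives the bound. *)

definition consistent :: "('e \<Rightarrow> 'v set) \<Rightarrow> ('e \<Rightarrow> int) \<Rightarrow> ('v \<Rightarrow> int) \<Rightarrow> 'e \<Rightarrow> bool" where
  "consistent ends \<sigma> \<tau> e \<longleftrightarrow> \<sigma> e = (if card (ends e) = 2 then (\<Prod>w\<in>ends e. \<tau> w) else 1)"

definition inconsistent_edges ::
    "'e set \<Rightarrow> ('e \<Rightarrow> 'v set) \<Rightarrow> ('e \<Rightarrow> int) \<Rightarrow> ('v \<Rightarrow> int) \<Rightarrow> 'e set" where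
  "inconsistent_edges E ends \<sigma> \<tau> = {e\<in>E. \<not> consistent ends \<sigma> \<tau> e}"

definition switch_on :: "'v set \<Rightarrow> ('v \<Rightarrow> int) \<Rightarrow> 'v \<Rightarrow> int" where
  "switch_on K \<tau> w = (if w \<in> K then - \<tau> w else \<tau> w)"

lemma consistent_cong:
  "(\<And>w. w \<in> ends e \<Longrightarrow> \<tau> w = \<tau>' w) \<Longrightarrow> consistent ends \<sigma> \<tau> e \<longleftrightarrow> consistent ends \<sigma> \<tau>' e"
  unfolding consistent_def by (metis (no_types, lifting) prod.cong)

lemma consistent_two_ends:
  "ends f = {x, y} \<Longrightarrow> x \<noteq> y \<Longrightarrow> consistent ends \<sigma> \<tau> f \<longleftrightarrow> \<sigma> f = \<tau> x * \<tau> y"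
  by (simp add: consistent_def)

lemma consistent_switch_on:
  assumes "ends f = {x, y}" and "x \<noteq> y"
  shows "consistent ends \<sigma> (switch_on K \<tau>) f \<longleftrightarrow>
    \<sigma> f = (if x \<in> K \<longleftrightarrow> y \<in> K then 1 else -1) * (\<tau> x * \<tau> y)"
  using assms by (simp add: consistent_two_ends switch_on_def)

lemma sign_power_even: "(t::int) \<in> {1, -1} \<Longrightarrow> even n \<Longrightarrow> t ^ n = 1"
  by (auto elim: evenE simp: power_mult)

lemma prod_consistent_edges:
  assumes "finite C" and "\<forall>e\<in>C. finite (ends e)" and "\<forall>e\<in>C. consistent ends \<sigma> \<tau> e"
  shows "(\<Prod>e\<in>C. \<sigma> e) = (\<Prod>w\<in>\<Union>(ends ` C). \<tau> w ^ card {e\<in>C. w \<in> ends e \<and> card (ends e) = 2})"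
proof -
  define U where "U = \<Union>(ends ` C)"
  define C2 where "C2 = {e\<in>C. card (ends e) = 2}"
  have "finite U" unfolding U_def using assms(1,2) by auto
  have "(\<Prod>e\<in>C. \<sigma> e) = (\<Prod>e\<in>C. if card (ends e) = 2 then (\<Prod>w\<in>ends e. \<tau> w) else 1)"
    using assms(3) by (intro prod.cong) (auto simp: consistent_def)
  also have "\<dots> = (\<Prod>e\<in>C2. \<Prod>w\<in>{w\<in>U. w \<in> ends e}. \<tau> w)"
  proof -
    have "{w\<in>U. w \<in> ends e} = ends e" if "e \<in> C" for e
      using that by (auto simp: U_def)
    then show ?thesis
      unfolding C2_def using assms(1) by (simp add: prod.inter_filter)
  qed
  also have "\<dots> = (\<Prod>w\<in>U. \<Prod>e\<in>{e\<in>C2. w \<in> ends e}. \<tau> w)"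
    by (rule prod.swap_restrict) (use assms(1) \<open>finite U\<close> in \<open>auto simp: C2_def\<close>)
  also have "\<dots> = (\<Prod>w\<in>U. \<tau> w ^ card {e\<in>C. w \<in> ends e \<and> card (ends e) = 2})"
    by (simp add: C2_def conj_ac)
  finally show ?thesis unfolding U_def .
qed

lemma balanced_if_consistent:
  assumes "\<forall>e\<in>F. finite (ends e)" and "\<forall>e\<in>F. consistent ends \<sigma> \<tau> e" and "\<forall>v. \<tau> v \<in> {1, -1}"
  shows "balanced ends \<sigma> F"
  unfolding balanced_def
proof (intro allI impI)
  fix C assume C: "C \<subseteq> F \<and> is_circle ends C"
  have "finite C" using C unfolding is_circle_def by auto
  have "(\<Prod>e\<in>C. \<sigma> e) = (\<Prod>w\<in>\<Union>(ends ` C). \<tau> w ^ card {e\<in>C. w \<in> ends e \<and> card (ends e) = 2})"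
    using prod_consistent_edges[OF \<open>finite C\<close>] assms(1,2) C by blast
  also have "\<dots> = (\<Prod>w\<in>\<Union>(ends ` C). 1)"
  proof (intro prod.cong refl sign_power_even)
    fix w assume "w \<in> \<Union>(ends ` C)"
    then have "deg_in C ends w = 2" using C unfolding is_circle_def by auto
    then show "even (card {e\<in>C. w \<in> ends e \<and> card (ends e) = 2})"
      unfolding deg_in_def by presburger
  qed (use assms(3) in auto)
  finally show "(\<Prod>e\<in>C. \<sigma> e) = 1" by simp
qed

definition joins :: "('e \<Rightarrow> 'v set) \<Rightarrow> 'e set \<Rightarrow> 'v \<Rightarrow> 'v \<Rightarrow> bool" where
  "joins ends S = (\<lambda>x y. \<exists>e\<in>S. ends e = {x, y})"

lemma symp_joins: "symp (joins ends S)"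
  by (auto intro: sympI simp: joins_def insert_commute)

lemma joins_mono: "S \<subseteq> T \<Longrightarrow> joins ends S x y \<Longrightarrow> joins ends T x y"
  by (auto simp: joins_def)

lemma is_circle_loop:
  assumes "ends e = {v}"
  shows "is_circle ends {e}"
proof -
  have "{f\<in>{e}. v \<in> ends f \<and> card (ends f) = 2} = {}" "{f\<in>{e}. ends f = {v}} = {e}"
    using assms by auto
  then show ?thesis using assms by (auto simp: is_circle_def deg_in_def)
qed

lemma rtrancl_path_last: "rtrancl_path r x xs y \<Longrightarrow> y = last (x # xs)"
  by (induction rule: rtrancl_path.induct) auto

lemma simple_path_edges:
  assumes "rtrancl_path (joins ends B) u ys v" and "distinct (u # ys)"
  shows "\<exists>S\<subseteq>B. finite S \<and> (\<forall>f\<in>S. card (ends f) = 2) \<and> \<Union>(ends ` S) \<subseteq> set (u # ys) \<and>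
    (\<forall>w. card {f\<in>S. w \<in> ends f} =
       (if u = v then 0 else if w = u \<or> w = v then 1 else if w \<in> set ys then 2 else 0)) \<and>
    (\<forall>w\<in>set (u # ys). (joins ends S)\<^sup>*\<^sup>* u w)"
  using assms
proof (induction rule: rtrancl_path.induct)
  case (base x)
  show ?case by (intro exI[of _ "{}"]) auto
next
  case (step u y ys v)
  then obtain S where S: "S \<subseteq> B" "finite S" "\<forall>f\<in>S. card (ends f) = 2" "\<Union>(ends ` S) \<subseteq> set (y # ys)"
    "\<forall>w. card {f\<in>S. w \<in> ends f} =
       (if y = v then 0 else if w = y \<or> w = v then 1 else if w \<in> set ys then 2 else 0)"
    "\<forall>w\<in>set (y # ys). (joins ends S)\<^sup>*\<^sup>* y w"
    by auto
  obtain f where f: "f \<in> B" "ends f = {u, y}" using step.hyps(1) by (auto simp: joins_def)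
  have u: "u \<noteq> y" "u \<notin> set ys" using step.prems by auto
  have "v = last (y # ys)" using rtrancl_path_last[OF step.hyps(2)] .
  then have "u \<noteq> v" and "y = v \<Longrightarrow> ys = []"
    using u step.prems by (auto simp: last_in_set split: if_splits)
  have "f \<notin> S" using S(4) f(2) u by auto
  have count: "card {g\<in>insert f S. w \<in> ends g} = card {g\<in>S. w \<in> ends g} + (if w \<in> {u, y} then 1 else 0)"
    for w
  proof -
    have "{g\<in>insert f S. w \<in> ends g} = (if w \<in> ends f then insert f {g\<in>S. w \<in> ends g} else {g\<in>S. w \<in> ends g})"
      by auto
    then show ?thesis using S(2) \<open>f \<notin> S\<close> f(2) by simp
  qed
  show ?case
  proof (intro exI[of _ "insert f S"] conjI allI ballI)
    fix w
    show "card {g\<in>insert f S. w \<in> ends g} =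
       (if u = v then 0 else if w = u \<or> w = v then 1 else if w \<in> set (y # ys) then 2 else 0)"
      unfolding count using S(5) u \<open>u \<noteq> v\<close> \<open>y = v \<Longrightarrow> ys = []\<close> by auto
  next
    fix w assume "w \<in> set (u # y # ys)"
    moreover have "joins ends (insert f S) u y" using f(2) by (auto simp: joins_def)
    moreover have "(joins ends (insert f S))\<^sup>*\<^sup>* y w" if "w \<in> set (y # ys)"
      using S(6) that by (auto intro: rtranclp_mono[THEN predicate2D, rotated] joins_mono[OF subset_insertI])
    ultimately show "(joins ends (insert f S))\<^sup>*\<^sup>* u w"
      by (auto intro: converse_rtranclp_into_rtranclp)
  qed (use S f u in auto)
qed

lemma joined_edge_closes_circle:
  assumes "(joins ends B)\<^sup>*\<^sup>* u v" and "u \<noteq> v" and "e \<notin> B" and "ends e = {u, v}"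
  shows "\<exists>C. e \<in> C \<and> C \<subseteq> insert e B \<and> is_circle ends C"
proof -
  obtain ys where path: "rtrancl_path (joins ends B) u ys v" and "distinct (u # ys)"
  proof -
    obtain xs where "rtrancl_path (joins ends B) u xs v"
      using assms(1) unfolding rtranclp_eq_rtrancl_path by blast
    then show ?thesis using rtrancl_path_distinct that by metis
  qed
  then obtain S where S: "S \<subseteq> B" "finite S" "\<forall>f\<in>S. card (ends f) = 2" "\<Union>(ends ` S) \<subseteq> set (u # ys)"
    "\<forall>w. card {f\<in>S. w \<in> ends f} =
       (if u = v then 0 else if w = u \<or> w = v then 1 else if w \<in> set ys then 2 else 0)"
    "\<forall>w\<in>set (u # ys). (joins ends S)\<^sup>*\<^sup>* u w"
    using simple_path_edges[OF path \<open>distinct (u # ys)\<close>] by blast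
  have "v \<in> set (u # ys)" using rtrancl_path_last[OF path] by simp
  have "e \<notin> S" using S(1) assms(3) by blast
  define C where "C = insert e S"
  have vertices: "\<Union>(ends ` C) \<subseteq> set (u # ys)" using S(4) assms(4) \<open>v \<in> set (u # ys)\<close> by (auto simp: C_def)
  have degree: "deg_in C ends w = 2" if "w \<in> set (u # ys)" for w
  proof -
    have loops: "{f\<in>C. ends f = {w}} = {}" using S(3) assms(2,4) by (auto simp: C_def)
    have edges: "{f\<in>C. w \<in> ends f \<and> card (ends f) = 2} =
        (if w \<in> {u, v} then insert e {f\<in>S. w \<in> ends f} else {f\<in>S. w \<in> ends f})"
      using S(3) assms(2,4) by (auto simp: C_def)
    have "card {f\<in>S. w \<in> ends f} + (if w \<in> {u, v} then 1 else 0) = 2"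
      using S(5) that assms(2) by auto
    then show ?thesis using S(2) \<open>e \<notin> S\<close> unfolding deg_in_def loops edges by (auto split: if_splits)
  qed
  have from_u: "(joins ends C)\<^sup>*\<^sup>* u w" if "w \<in> set (u # ys)" for w
    using S(6) that by (auto intro: rtranclp_mono[THEN predicate2D, rotated] joins_mono simp: C_def)
  have connected: "(joins ends C)\<^sup>*\<^sup>* w1 w2" if "w1 \<in> set (u # ys)" "w2 \<in> set (u # ys)" for w1 w2
    using sympD[OF symp_rtranclp[OF symp_joins] from_u[OF that(1)]] from_u[OF that(2)]
    by (rule rtranclp_trans)
  have "is_circle ends C"
    unfolding is_circle_def
  proof (intro conjI ballI)
    show "C \<noteq> {}" "finite C" using S(2) by (auto simp: C_def)
  next
    fix w assume "w \<in> \<Union>(ends ` C)"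
    then show "deg_in C ends w = 2" using vertices degree by blast
  next
    fix w1 w2 assume "w1 \<in> \<Union>(ends ` C)" "w2 \<in> \<Union>(ends ` C)"
    then show "(\<lambda>x y. \<exists>e\<in>C. ends e = {x, y})\<^sup>*\<^sup>* w1 w2"
      using connected vertices unfolding joins_def by blast
  qed
  then show ?thesis using S(1) by (auto simp: C_def)
qed

(* Flipping the sign of e makes the circle it closes consistent, hence positive; so that circle is negative. *)
lemma not_balanced_if_joined_inconsistent:
  assumes "\<forall>f\<in>insert e B. finite (ends f)" and "\<forall>f\<in>B. consistent ends \<sigma> \<tau> f" and "\<forall>v. \<tau> v \<in> {1, -1}"
    and "(joins ends B)\<^sup>*\<^sup>* u v" and "u \<noteq> v" and "e \<notin> B" and "ends e = {u, v}"
    and "\<sigma> e = - (\<tau> u * \<tau> v)"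
  shows "\<not> balanced ends \<sigma> (insert e B)"
proof -
  obtain C where C: "e \<in> C" "C \<subseteq> insert e B" "is_circle ends C"
    using joined_edge_closes_circle assms(4-7) by metis
  define \<sigma>' where "\<sigma>' = \<sigma>(e := \<tau> u * \<tau> v)"
  have "\<forall>f\<in>insert e B. consistent ends \<sigma>' \<tau> f"
    using assms(2,5-7) by (auto simp: \<sigma>'_def consistent_two_ends consistent_def)
  then have "(\<Prod>f\<in>C. \<sigma>' f) = 1"
    using balanced_if_consistent[OF assms(1) _ assms(3)] C unfolding balanced_def by blast
  moreover have "finite C" using C(3) by (simp add: is_circle_def)
  ultimately have "(\<Prod>f\<in>C. \<sigma> f) = - 1"
    using C(1) assms(8) by (simp add: prod.remove \<sigma>'_def)
  then show ?thesis using C unfolding balanced_def by force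
qed

lemma consistent_switch_component:
  assumes "\<forall>f\<in>B. consistent ends \<sigma> \<tau> f" and "\<not> (joins ends B)\<^sup>*\<^sup>* u v"
    and "ends e = {u, v}" and "u \<noteq> v" and "\<sigma> e = - (\<tau> u * \<tau> v)"
  shows "\<forall>f\<in>insert e B. consistent ends \<sigma> (switch_on {w. (joins ends B)\<^sup>*\<^sup>* u w} \<tau>) f"
proof
  define K where "K = {w. (joins ends B)\<^sup>*\<^sup>* u w}"
  have closed: "x \<in> K \<longleftrightarrow> y \<in> K" if "joins ends B x y" for x y
    using that sympD[OF symp_joins that] unfolding K_def
    by (auto intro: rtranclp.rtrancl_into_rtrancl)
  fix f assume f: "f \<in> insert e B"
  show "consistent ends \<sigma> (switch_on K \<tau>) f"
  proof (cases "card (ends f) = 2")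
    case True
    then obtain x y where xy: "ends f = {x, y}" "x \<noteq> y" by (auto simp: card_2_iff)
    show ?thesis
    proof (cases "f = e")
      case True
      then show ?thesis using assms(2-5) xy by (auto simp: consistent_switch_on K_def doubleton_eq_iff)
    next
      case False
      then have "joins ends B x y" using f xy by (auto simp: joins_def)
      then have "x \<in> K \<longleftrightarrow> y \<in> K" by (rule closed)
      moreover have "\<sigma> f = \<tau> x * \<tau> y"
        using assms(1) f False xy by (auto simp: consistent_two_ends)
      ultimately show ?thesis by (simp add: consistent_switch_on[of ends f x y, OF xy])
    qed
  next
    case False
    then show ?thesis using assms(1,3,4) f by (auto simp: consistent_def)
  qed
qed

lemma balanced_imp_consistent_switching:
  assumes "finite B" and "\<forall>e\<in>B. card (ends e) \<in> {1, 2} \<and> \<sigma> e \<in> {1, -1}" and "balanced ends \<sigma> B"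
  shows "\<exists>\<tau>. (\<forall>v. \<tau> v \<in> {1, -1}) \<and> (\<forall>e\<in>B. consistent ends \<sigma> \<tau> e)"
  using assms
proof (induction B rule: finite_induct)
  case empty
  show ?case by (intro exI[of _ "\<lambda>_. 1"]) auto
next
  case (insert e B)
  have bal: "balanced ends \<sigma> (insert e B)" using insert.prems by blast
  then have "balanced ends \<sigma> B" unfolding balanced_def by blast
  then obtain \<tau> where \<tau>: "\<forall>v. \<tau> v \<in> {1, -1}" "\<forall>f\<in>B. consistent ends \<sigma> \<tau> f"
    using insert.IH insert.prems by blast
  have e: "card (ends e) \<in> {1, 2}" "\<sigma> e \<in> {1, -1}" using insert.prems by auto
  show ?case
  proof (cases "consistent ends \<sigma> \<tau> e")
    case True
    then show ?thesis using \<tau> by blast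
  next
    case inconsistent: False
    consider v where "ends e = {v}" | u v where "ends e = {u, v}" "u \<noteq> v"
      using e(1) by (auto simp: card_1_singleton_iff card_2_iff)
    then show ?thesis
    proof cases
      case (1 v)
      then have "\<sigma> e = -1" using inconsistent e(2) by (auto simp: consistent_def)
      then show ?thesis using bal is_circle_loop[of ends e v, OF 1] unfolding balanced_def by force
    next
      case (2 u v)
      have \<sigma>e: "\<sigma> e = - (\<tau> u * \<tau> v)"
        using inconsistent e(2) \<tau>(1)[rule_format, of u] \<tau>(1)[rule_format, of v] 2
        by (auto simp: consistent_two_ends)
      have "\<forall>f\<in>insert e B. finite (ends f)"
        using insert.prems(1) by (fastforce intro!: card_ge_0_finite)
      then have "\<not> (joins ends B)\<^sup>*\<^sup>* u v"
        using not_balanced_if_joined_inconsistent[OF _ \<tau>(2,1) _ 2(2) insert.hyps(2) 2(1) \<sigma>e] bal by blast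
      then have "\<forall>f\<in>insert e B. consistent ends \<sigma> (switch_on {w. (joins ends B)\<^sup>*\<^sup>* u w} \<tau>) f"
        using consistent_switch_component[OF \<tau>(2) _ 2 \<sigma>e] by blast
      moreover have "switch_on K \<tau> w \<in> {1, -1}" for K w using \<tau>(1) by (auto simp: switch_on_def)
      ultimately show ?thesis by blast
    qed
  qed
qed

lemma inconsistent_edges_switch_vertex:
  assumes "\<forall>e\<in>E. \<sigma> e \<in> {1, -1}" and "\<forall>v. \<tau> v \<in> {1, -1}"
  shows "inconsistent_edges E ends \<sigma> (switch_on {x} \<tau>) =
    sym_diff (inconsistent_edges E ends \<sigma> \<tau>) {e\<in>E. x \<in> ends e \<and> card (ends e) = 2}"
proof -
  have "consistent ends \<sigma> (switch_on {x} \<tau>) e \<longleftrightarrow>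
      (consistent ends \<sigma> \<tau> e \<longleftrightarrow> \<not> (x \<in> ends e \<and> card (ends e) = 2))" if "e \<in> E" for e
  proof (cases "card (ends e) = 2")
    case True
    then obtain y z where yz: "ends e = {y, z}" "y \<noteq> z" by (auto simp: card_2_iff)
    have "\<sigma> e \<in> {1, -1}" "\<tau> y \<in> {1, -1}" "\<tau> z \<in> {1, -1}" using assms that by auto
    then show ?thesis
      using yz by (auto simp: consistent_switch_on[of ends e y z, OF yz] consistent_two_ends)
  next
    case False
    then show ?thesis by (simp add: consistent_def)
  qed
  then show ?thesis by (auto simp: inconsistent_edges_def)
qed

lemma inconsistent_edges_at_local_minimum:
  assumes "finite E" and "\<forall>e\<in>E. card (ends e) \<in> {1, 2} \<and> \<sigma> e \<in> {1, -1}" and "\<forall>v. \<tau> v \<in> {1, -1}"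
    and "card (inconsistent_edges E ends \<sigma> \<tau>) \<le> card (inconsistent_edges E ends \<sigma> (switch_on {x} \<tau>))"
  shows "card {e\<in>inconsistent_edges E ends \<sigma> \<tau>. x \<in> ends e} \<le> deg_in E ends x div 2"
proof -
  define F where "F = inconsistent_edges E ends \<sigma> \<tau>"
  define M where "M = {e\<in>E. x \<in> ends e \<and> card (ends e) = 2}"
  define L where "L = {e\<in>E. ends e = {x}}"
  have fin: "finite F" "finite M" "finite L"
    using assms(1) by (auto simp: F_def M_def L_def inconsistent_edges_def)
  have "card F \<le> card (sym_diff F M)"
    using assms(4) inconsistent_edges_switch_vertex[of E \<sigma> \<tau> ends x] assms(2,3)
    by (simp add: F_def M_def)
  also have "\<dots> = card (F - M) + card (M - F)"
    using fin by (intro card_Un_disjoint) auto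
  finally have "card (F \<inter> M) \<le> card M div 2"
    using card_Int_Diff[OF fin(1), of M] card_Int_Diff[OF fin(2), of F] by (simp add: Int_commute)
  moreover have "{e\<in>F. x \<in> ends e} \<subseteq> L \<union> (F \<inter> M)"
    using assms(2) by (auto simp: F_def M_def L_def inconsistent_edges_def card_1_singleton_iff)
  then have "card {e\<in>F. x \<in> ends e} \<le> card L + card (F \<inter> M)"
    using fin by (meson card_Un_le card_mono finite_Int finite_UnI order_trans)
  moreover have "deg_in E ends x = card M + 2 * card L"
    by (simp add: deg_in_def M_def L_def)
  ultimately show ?thesis unfolding F_def by linarith
qed

lemma inconsistent_edge_meets_switched_set:
  assumes "\<forall>e\<in>E. ends e \<inter> X = {} \<longrightarrow> consistent ends \<sigma> \<tau>\<^sub>0 e" and "\<forall>v. v \<notin> X \<longrightarrow> \<tau> v = \<tau>\<^sub>0 v"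
    and "e \<in> inconsistent_edges E ends \<sigma> \<tau>"
  shows "ends e \<inter> X \<noteq> {}"
proof
  assume "ends e \<inter> X = {}"
  then have "consistent ends \<sigma> \<tau> e \<longleftrightarrow> consistent ends \<sigma> \<tau>\<^sub>0 e"
    using assms(2) by (intro consistent_cong) auto
  then show False using assms(1,3) \<open>ends e \<inter> X = {}\<close> by (auto simp: inconsistent_edges_def)
qed

lemma frustration_index_le_card:
  assumes "finite E" and "F \<subseteq> E" and "balanced ends \<sigma> (E - F)"
  shows "frustration_index E ends \<sigma> \<le> card F"
  unfolding frustration_index_def
  using assms by (intro Min_le) (auto intro: finite_subset[of _ "card ` Pow E"])

lemma frustration_index_le_sum_half_degrees:
  assumes graph: "signed_graph V E ends \<sigma>" and "finite X"
    and bal: "balanced ends \<sigma> {e\<in>E. ends e \<inter> X = {}}"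
  shows "frustration_index E ends \<sigma> \<le> (\<Sum>x\<in>X. deg_in E ends x div 2)"
proof -
  have "finite E" and E: "\<forall>e\<in>E. card (ends e) \<in> {1, 2} \<and> \<sigma> e \<in> {1, -1}"
    using graph by (auto simp: signed_graph_def)
  obtain \<tau>\<^sub>0 where "\<forall>v. \<tau>\<^sub>0 v \<in> {1, -1}" and \<tau>\<^sub>0: "\<forall>e\<in>E. ends e \<inter> X = {} \<longrightarrow> consistent ends \<sigma> \<tau>\<^sub>0 e"
    using balanced_imp_consistent_switching[OF _ _ bal] \<open>finite E\<close> E by fastforce
  define T where "T = {\<tau>. (\<forall>v. \<tau> v \<in> {1::int, -1}) \<and> (\<forall>v. v \<notin> X \<longrightarrow> \<tau> v = \<tau>\<^sub>0 v)}"
  have "\<tau>\<^sub>0 \<in> T" using \<open>\<forall>v. \<tau>\<^sub>0 v \<in> {1, -1}\<close> by (simp add: T_def)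
  then obtain \<tau> where "\<tau> \<in> T"
    and min: "\<And>\<tau>'. \<tau>' \<in> T \<Longrightarrow> card (inconsistent_edges E ends \<sigma> \<tau>) \<le> card (inconsistent_edges E ends \<sigma> \<tau>')"
    using ex_has_least_nat[of "\<lambda>\<tau>. \<tau> \<in> T" \<tau>\<^sub>0 "\<lambda>\<tau>. card (inconsistent_edges E ends \<sigma> \<tau>)"] by blast
  have \<tau>: "\<forall>v. \<tau> v \<in> {1, -1}" using \<open>\<tau> \<in> T\<close> by (simp add: T_def)
  define F where "F = inconsistent_edges E ends \<sigma> \<tau>"
  have "F \<subseteq> E" by (auto simp: F_def inconsistent_edges_def)
  have "balanced ends \<sigma> (E - F)"
    using E \<tau> by (intro balanced_if_consistent) (auto simp: F_def inconsistent_edges_def intro!: card_ge_0_finite)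
  then have "frustration_index E ends \<sigma> \<le> card F"
    using frustration_index_le_card[OF \<open>finite E\<close> \<open>F \<subseteq> E\<close>] by blast
  also have "\<dots> \<le> card (\<Union>x\<in>X. {e\<in>F. x \<in> ends e})"
  proof (rule card_mono)
    show "finite (\<Union>x\<in>X. {e\<in>F. x \<in> ends e})"
      using \<open>finite E\<close> \<open>F \<subseteq> E\<close> by (auto intro: finite_subset)
    have "\<forall>v. v \<notin> X \<longrightarrow> \<tau> v = \<tau>\<^sub>0 v" using \<open>\<tau> \<in> T\<close> by (simp add: T_def)
    then have "ends e \<inter> X \<noteq> {}" if "e \<in> F" for e
      using inconsistent_edge_meets_switched_set[OF \<tau>\<^sub>0] that unfolding F_def by blast
    then show "F \<subseteq> (\<Union>x\<in>X. {e\<in>F. x \<in> ends e})" by blast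
  qed
  also have "\<dots> \<le> (\<Sum>x\<in>X. card {e\<in>F. x \<in> ends e})"
    by (rule card_UN_le[OF \<open>finite X\<close>])
  also have "\<dots> \<le> (\<Sum>x\<in>X. deg_in E ends x div 2)"
  proof (rule sum_mono)
    fix x assume "x \<in> X"
    then have "switch_on {x} \<tau> \<in> T" using \<open>\<tau> \<in> T\<close> by (auto simp: T_def switch_on_def)
    then show "card {e\<in>F. x \<in> ends e} \<le> deg_in E ends x div 2"
      unfolding F_def using inconsistent_edges_at_local_minimum[OF \<open>finite E\<close> E \<tau>] min by blast
  qed
  finally show ?thesis .
qed

lemma frustration_number_attained:
  assumes "signed_graph V E ends \<sigma>"
  obtains X where "X \<subseteq> V" and "balanced ends \<sigma> {e\<in>E. ends e \<inter> X = {}}"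
    and "card X = frustration_number V E ends \<sigma>"
proof -
  define S where "S = {card X | X. X \<subseteq> V \<and> balanced ends \<sigma> {e\<in>E. ends e \<inter> X = {}}}"
  have "ends e \<noteq> {}" "ends e \<subseteq> V" if "e \<in> E" for e
    using assms that by (auto simp: signed_graph_def)
  then have no_edges: "{e\<in>E. ends e \<inter> V = {}} = {}" by blast
  have "balanced ends \<sigma> {e\<in>E. ends e \<inter> V = {}}"
    unfolding no_edges balanced_def is_circle_def by blast
  then have "card V \<in> S" unfolding S_def by blast
  moreover have "finite S"
    using assms by (auto simp: S_def signed_graph_def intro: finite_subset[of _ "card ` Pow V"])
  ultimately have "frustration_number V E ends \<sigma> \<in> S"
    unfolding frustration_number_def S_def[symmetric] using Min_in by blast
  then show ?thesis using that by (auto simp: S_def)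
qed

lemma sum_le_sum_initial_segment:
  fixes g :: "nat \<Rightarrow> 'a::ordered_comm_monoid_add"
  assumes "\<And>i j. 1 \<le> i \<Longrightarrow> i \<le> j \<Longrightarrow> j \<le> n \<Longrightarrow> g j \<le> g i" and "I \<subseteq> {1..n}"
  shows "sum g I \<le> sum g {1..card I}"
proof -
  have "finite I" using assms(2) finite_subset by blast
  then show ?thesis
    using assms(2)
  proof (induction I rule: finite_linorder_max_induct)
    case empty
    show ?case by simp
  next
    case (insert b A)
    have "A \<subseteq> {1..b - 1}" using insert.hyps(2) insert.prems by fastforce
    then have "Suc (card A) \<le> b" using card_mono[of "{1..b - 1}" A] insert.prems by fastforce
    then have "g b \<le> g (Suc (card A))" using assms(1) insert.prems by simp
    moreover have "sum g A \<le> sum g {1..card A}" using insert.IH insert.prems by simp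
    moreover have "b \<notin> A" using insert.hyps(2) by blast
    ultimately show ?case using insert.hyps(1) by (simp add: add_mono add.commute)
  qed
qed

lemma sum_le_sum_largest:
  assumes "bij_betw d {1..n} V"
    and "\<And>i j. 1 \<le> i \<Longrightarrow> i \<le> j \<Longrightarrow> j \<le> n \<Longrightarrow> g (d j) \<le> (g (d i) :: 'a::ordered_comm_monoid_add)"
    and "X \<subseteq> V"
  shows "(\<Sum>x\<in>X. g x) \<le> (\<Sum>i=1..card X. g (d i))"
proof -
  define I where "I = {i\<in>{1..n}. d i \<in> X}"
  have "inj_on d {1..n}" and "d ` {1..n} = V" using assms(1) by (simp_all add: bij_betw_def)
  then have "X = d ` I" using assms(3) by (auto simp: I_def)
  moreover have "inj_on d I" using \<open>inj_on d {1..n}\<close> by (rule inj_on_subset) (auto simp: I_def)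
  ultimately have "(\<Sum>x\<in>X. g x) = (\<Sum>i\<in>I. g (d i))" and "card X = card I"
    by (simp_all add: sum.reindex card_image)
  moreover have "(\<Sum>i\<in>I. g (d i)) \<le> (\<Sum>i=1..card I. g (d i))"
    using assms(2) by (intro sum_le_sum_initial_segment[where n = n]) (auto simp: I_def)
  ultimately show ?thesis by simp
qed

theorem proposition2:
  fixes V :: "'v set" and E :: "'e set" and ends :: "'e \<Rightarrow> 'v set"
    and \<sigma> :: "'e \<Rightarrow> int" and d :: "nat \<Rightarrow> 'v"
  assumes "signed_graph V E ends \<sigma>"
    and "bij_betw d {1..card V} V"
    and "\<And>i j. 1 \<le> i \<Longrightarrow> i \<le> j \<Longrightarrow> j \<le> card V \<Longrightarrow> deg_in E ends (d j) \<le> deg_in E ends (d i)"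
  shows "frustration_index E ends \<sigma> \<le>
           (\<Sum>i=1..frustration_number V E ends \<sigma>. deg_in E ends (d i) div 2)"
proof -
  obtain X where "X \<subseteq> V" and bal: "balanced ends \<sigma> {e\<in>E. ends e \<inter> X = {}}"
    and card_X: "card X = frustration_number V E ends \<sigma>"
    using frustration_number_attained[OF assms(1)] by blast
  have "finite X" using \<open>X \<subseteq> V\<close> assms(1) by (auto simp: signed_graph_def intro: finite_subset)
  have "frustration_index E ends \<sigma> \<le> (\<Sum>x\<in>X. deg_in E ends x div 2)"
    by (rule frustration_index_le_sum_half_degrees[OF assms(1) \<open>finite X\<close> bal])
  also have "\<dots> \<le> (\<Sum>i=1..card X. deg_in E ends (d i) div 2)"
    using sum_le_sum_largest[OF assms(2) _ \<open>X \<subseteq> V\<close>, of "\<lambda>x. deg_in E ends x div 2"] assms(3)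
    by (simp add: div_le_mono)
  finally show ?thesis unfolding card_X .
qed

end
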